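(* Let $f:[0,\infty)\to[0,1]$ be a $C^1$, non-decreasing function with $f(0)=0$ and $f'(0)\ge\lambda$ for some fixed $\lambda>0$. Then for every $\epsilon>0$ there exists a piecewise linear function $\widetilde f$ consisting of only finitely many line segments such that $\frac{|f(t)-\widetilde f(t)|}{f(t)}\le\epsilon$ for all $t>0$. *)

theory Defs
  imports "HOL-Analysis.Analysis"
begin

definition pl_piece :: "real list \<Rightarrow> nat \<Rightarrow> real set" where
  "pl_piece xs i = (if Suc i < length xs then {xs ! i .. xs ! Suc i} else {xs ! i ..})"

definition piecewise_linear_nonneg :: "(real \<Rightarrow> real) \<Rightarrow> bool" where
  "piecewise_linear_nonneg g \<longleftrightarrow>
     continuous_on {0..} g \<and>
     (\<exists>xs :: real list. xs \<noteq> [] \<and> hd xs = 0 \<and> sorted_wrt (<) xs \<and>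
        (\<forall>i < length xs. \<exists>a b. \<forall>t \<in> pl_piece xs i. g t = a * t + b))"

end

theory Submission
  imports Defs
begin

text \<open>Near 0, f is within relative error \<eta> of its tangent f'(0) t, so on a short interval
  [0, a] the chord through (0, 0) and (a, f a) has relative error O(\<eta>). On [a, \<infinity>) we
  have f \<ge> f a > 0, so an absolute error \<epsilon> f(a) suffices there: f is monotone and bounded,
  hence within \<epsilon> f(a) of f(b) beyond some b, and on the compact interval [a, b] uniform
  continuity allows interpolation on a fine grid, where between consecutive nodes a monotone
  function and its chord differ by at most the increment of f.\<close>

text \<open>Outside the range of the nodes, the first chord is extended to the left and the value
  at the last node is kept to the right.\<close>

fun lin_interp :: "(real \<Rightarrow> real) \<Rightarrow> real list \<Rightarrow> real \<Rightarrow> real" where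
  "lin_interp f [] t = 0"
| "lin_interp f [x] t = f x"
| "lin_interp f (x # y # xs) t =
     (if t \<le> y then f x + (t - x) / (y - x) * (f y - f x) else lin_interp f (y # xs) t)"

lemma lin_interp_at_hd:
  assumes "sorted_wrt (<) (x # xs)"
  shows "lin_interp f (x # xs) x = f x"
  using assms by (cases xs) auto

lemma lin_interp_beyond_last:
  assumes "sorted_wrt (<) xs" "xs \<noteq> []" "last xs \<le> t"
  shows "lin_interp f xs t = f (last xs)"
  using assms
proof (induction f xs t rule: lin_interp.induct)
  case (3 f x y xs t)
  show ?case
  proof (cases "xs = []")
    case False
    then have "y < last xs" using "3.prems"(1) by simp
    then have "\<not> t \<le> y" using "3.prems"(3) False by simp
    then show ?thesis using 3 False by simp
  qed (use "3.prems" in auto)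
qed auto

lemma continuous_lin_interp:
  assumes "sorted_wrt (<) xs"
  shows "continuous_on UNIV (lin_interp f xs)"
  using assms
proof (induction xs rule: induct_list012)
  case (3 x y xs)
  have xy: "x < y" and sorted: "sorted_wrt (<) (y # xs)" using "3.prems" by auto
  let ?chord = "\<lambda>t. f x + (t - x) / (y - x) * (f y - f x)"
  have "continuous_on ({..y} \<union> {y..}) (\<lambda>t. if t \<le> y then ?chord t else lin_interp f (y # xs) t)"
  proof (rule continuous_on_cases)
    show "continuous_on {..y} ?chord" using xy by (intro continuous_intros) auto
    show "continuous_on {y..} (lin_interp f (y # xs))"
      using "3.IH"(2)[OF sorted] continuous_on_subset by blast
    show "\<forall>t. t \<in> {..y} \<and> \<not> t \<le> y \<or> t \<in> {y..} \<and> t \<le> y \<longrightarrow> ?chord t = lin_interp f (y # xs) t"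
      using xy lin_interp_at_hd[OF sorted] by auto
  qed auto
  moreover have "{..y} \<union> {y..} = (UNIV :: real set)" by auto
  ultimately show ?case by simp
qed (auto intro: continuous_intros)

lemma lin_interp_Cons_Cons_right:
  assumes "sorted_wrt (<) (x # y # xs)" "y \<le> t"
  shows "lin_interp f (x # y # xs) t = lin_interp f (y # xs) t"
  using assms lin_interp_at_hd[of y xs f] by (cases "t = y") auto

lemma pl_piece_Cons_Suc: "pl_piece (x # xs) (Suc i) = pl_piece xs i"
  by (simp add: pl_piece_def)

lemma lin_interp_affine_on_piece:
  assumes "sorted_wrt (<) xs" "i < length xs"
  shows "\<exists>a b. \<forall>t \<in> pl_piece xs i. lin_interp f xs t = a * t + b"
  using assms
proof (induction xs arbitrary: i rule: induct_list012)
  case (2 x)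
  then show ?case by (intro exI[of _ 0] exI[of _ "f x"]) (simp add: pl_piece_def)
next
  case (3 x y xs)
  show ?case
  proof (cases i)
    case 0
    define a where "a = (f y - f x) / (y - x)"
    have "lin_interp f (x # y # xs) t = a * t + (f x - a * x)" if "t \<in> {x..y}" for t
    proof -
      have "(t - x) / (y - x) * (f y - f x) = a * (t - x)" by (simp add: a_def)
      then show ?thesis using that by (simp add: algebra_simps)
    qed
    then show ?thesis using 0 by (intro exI[of _ a] exI[of _ "f x - a * x"]) (simp add: pl_piece_def)
  next
    case (Suc j)
    have j: "j < length (y # xs)" and sorted: "sorted_wrt (<) (y # xs)"
      using "3.prems" Suc by auto
    have "y \<le> (y # xs) ! j"
      using sorted_nth_mono[OF strict_sorted_imp_sorted[OF sorted], of 0 j] j by simp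
    then have "y \<le> t" if "t \<in> pl_piece (y # xs) j" for t
      using that by (auto simp: pl_piece_def split: if_splits)
    then have "\<forall>t \<in> pl_piece (x # y # xs) i. lin_interp f (x # y # xs) t = lin_interp f (y # xs) t"
      using lin_interp_Cons_Cons_right[OF "3.prems"(1)] unfolding Suc pl_piece_Cons_Suc by blast
    then show ?thesis
      using "3.IH"(2)[OF sorted j] Suc by (simp add: pl_piece_Cons_Suc)
  qed
qed simp

lemma piecewise_linear_lin_interp:
  assumes "sorted_wrt (<) xs" "xs \<noteq> []" "hd xs = 0"
  shows "piecewise_linear_nonneg (lin_interp f xs)"
  unfolding piecewise_linear_nonneg_def
  using assms continuous_on_subset[OF continuous_lin_interp[OF assms(1)]]
    lin_interp_affine_on_piece[OF assms(1)] by blast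

lemma mono_on_chord_error:
  fixes f :: "real \<Rightarrow> real"
  assumes "mono_on {x..y} f" "x < y" "t \<in> {x..y}"
  shows "\<bar>f t - (f x + (t - x) / (y - x) * (f y - f x))\<bar> \<le> f y - f x"
proof -
  define \<theta> where "\<theta> = (t - x) / (y - x)"
  have \<theta>: "0 \<le> \<theta>" "\<theta> \<le> 1" using assms(2,3) by (auto simp: \<theta>_def)
  have "f x \<le> f t" "f t \<le> f y" using assms by (auto intro: mono_onD)
  moreover have "0 \<le> \<theta> * (f y - f x)" "\<theta> * (f y - f x) \<le> f y - f x"
    using \<theta> calculation by (auto intro: mult_left_le_one_le)
  ultimately show ?thesis unfolding \<theta>_def by linarith
qed

lemma lin_interp_error_le:
  assumes "sorted_wrt (<) xs" "xs \<noteq> []" "mono_on {hd xs..last xs} f"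
    and "successively (\<lambda>x y. \<bar>f y - f x\<bar> \<le> e) xs" "0 \<le> e" "t \<in> {hd xs..last xs}"
  shows "\<bar>f t - lin_interp f xs t\<bar> \<le> e"
  using assms
proof (induction xs rule: induct_list012)
  case (3 x y xs)
  have xy: "x < y" and sorted: "sorted_wrt (<) (y # xs)" using "3.prems"(1) by auto
  have y_last: "y \<le> last (y # xs)"
    using sorted by (cases "xs = []") (auto dest: bspec[OF _ last_in_set])
  show ?case
  proof (cases "t \<le> y")
    case True
    have "mono_on {x..y} f" using "3.prems"(3) y_last by (auto intro: mono_on_subset)
    then show ?thesis
      using mono_on_chord_error[of x y f t] xy True "3.prems"(4,6) by fastforce
  next
    case False
    have "mono_on {y..last (y # xs)} f" using "3.prems"(3) xy by (auto intro: mono_on_subset)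
    then show ?thesis using "3.IH"(2)[OF sorted] False "3.prems"(4-6) by auto
  qed
qed auto

lemma lin_interp_error_from_hd:
  assumes "sorted_wrt (<) xs" "xs \<noteq> []" "mono_on {hd xs..} f"
    and "successively (\<lambda>x y. \<bar>f y - f x\<bar> \<le> e) xs"
    and tail: "\<And>t. last xs \<le> t \<Longrightarrow> f t - f (last xs) \<le> e" and "hd xs \<le> t"
  shows "\<bar>f t - lin_interp f xs t\<bar> \<le> e"
proof (cases "t \<le> last xs")
  case True
  have "0 \<le> e" using tail[of "last xs"] by simp
  moreover have "mono_on {hd xs..last xs} f" using assms(3) by (auto intro: mono_on_subset)
  ultimately show ?thesis using lin_interp_error_le assms True by simp
next
  case False
  have "hd xs \<le> last xs"
    using assms(1,2) by (cases xs) (auto dest: bspec[OF _ last_in_set])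
  then have "f (last xs) \<le> f t" using assms(3) False by (auto intro: mono_onD)
  then show ?thesis using lin_interp_beyond_last[OF assms(1,2)] tail False by simp
qed


lemma bdd_above_ray_almost_max:
  fixes f :: "real \<Rightarrow> real"
  assumes "bdd_above (f ` {c..})" "e > 0"
  shows "\<exists>b\<ge>c. \<forall>t\<ge>b. f t - f b < e"
proof -
  define L where "L = Sup (f ` {c..})"
  have "L - e < L" using \<open>e > 0\<close> by simp
  then obtain b where b: "b \<ge> c" "L - e < f b"
    unfolding L_def using assms(1) by (subst (asm) less_cSup_iff) auto
  have "f t - f b < e" if "t \<ge> b" for t
  proof -
    have "f t \<le> L" unfolding L_def using assms(1) that b(1) by (intro cSup_upper) auto
    then show ?thesis using b(2) by linarith
  qed
  then show ?thesis using b by blast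
qed


lemma uniform_grid_small_steps:
  fixes f :: "real \<Rightarrow> real"
  assumes "continuous_on {a..b} f" "a < b" "e > 0"
  shows "\<exists>ys. ys \<noteq> [] \<and> hd ys = a \<and> last ys = b \<and> sorted_wrt (<) ys \<and>
           successively (\<lambda>x y. \<bar>f y - f x\<bar> \<le> e) ys"
proof -
  obtain \<delta> where "\<delta> > 0" and \<delta>: "\<And>x y. x \<in> {a..b} \<Longrightarrow> y \<in> {a..b} \<Longrightarrow> dist y x < \<delta> \<Longrightarrow>
      dist (f y) (f x) < e"
    using compact_uniformly_continuous[OF assms(1)] \<open>e > 0\<close>
    unfolding uniformly_continuous_on_def by (metis compact_Icc)
  define N where "N = nat \<lceil>(b - a) / \<delta>\<rceil> + 1"
  define h where "h = (b - a) / N"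
  have "N > 0" by (simp add: N_def)
  have "h > 0" using \<open>N > 0\<close> assms(2) by (simp add: h_def)
  have "(b - a) / \<delta> < N" unfolding N_def by linarith
  then have "h < \<delta>" using \<open>\<delta> > 0\<close> \<open>N > 0\<close> by (simp add: h_def field_simps)
  define x where "x k = a + real k * h" for k
  have x_in: "x k \<in> {a..b}" if "k \<le> N" for k
  proof -
    have "0 \<le> real k * h" "real k * h \<le> N * h" using that \<open>h > 0\<close> by (simp_all add: mult_right_mono)
    moreover have "real N * h = b - a" using \<open>N > 0\<close> by (simp add: h_def)
    ultimately show ?thesis by (simp add: x_def)
  qed
  define ys where "ys = map x [0..<Suc N]"
  have "ys \<noteq> []" "hd ys = a" by (simp_all add: ys_def x_def upt_conv_Cons del: upt_Suc)
  moreover have "last ys = b" using \<open>N > 0\<close> by (simp add: ys_def x_def h_def)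
  moreover have "sorted_wrt (<) ys"
    unfolding ys_def using \<open>h > 0\<close> by (intro sorted_wrt_map_mono[OF sorted_wrt_upt]) (simp add: x_def)
  moreover have "successively (\<lambda>x y. \<bar>f y - f x\<bar> \<le> e) ys"
  proof -
    have "\<bar>f (x (Suc k)) - f (x k)\<bar> \<le> e" if "k < N" for k
      using \<delta>[OF x_in[of k] x_in[of "Suc k"]] that \<open>h < \<delta>\<close> \<open>h > 0\<close>
      by (simp add: x_def dist_real_def algebra_simps)
    then show ?thesis unfolding ys_def successively_conv_nth by (simp del: upt_Suc)
  qed
  ultimately show ?thesis by blast
qed


lemma lin_interp_approx_on_ray:
  fixes f :: "real \<Rightarrow> real"
  assumes mono: "mono_on {a..} f" and "bdd_above (f ` {a..})" "continuous_on {a..} f" "e > 0"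
  shows "\<exists>y zs. sorted_wrt (<) (a # y # zs) \<and> (\<forall>t\<ge>a. \<bar>f t - lin_interp f (a # y # zs) t\<bar> \<le> e)"
proof -
  have "bdd_above (f ` {a + 1..})" using assms(2) by (rule bdd_above_mono) auto
  then obtain b where "b \<ge> a + 1" and tail: "\<And>t. b \<le> t \<Longrightarrow> f t - f b \<le> e"
    using bdd_above_ray_almost_max[of f "a + 1" e] \<open>e > 0\<close> by (meson less_imp_le)
  have "continuous_on {a..b} f" using assms(3) by (rule continuous_on_subset) auto
  then obtain ys where ys: "ys \<noteq> []" "hd ys = a" "last ys = b" "sorted_wrt (<) ys"
      "successively (\<lambda>x y. \<bar>f y - f x\<bar> \<le> e) ys"
    using uniform_grid_small_steps[of a b f e] \<open>b \<ge> a + 1\<close> \<open>e > 0\<close> by auto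
  obtain y zs where ys_eq: "ys = a # y # zs"
    using ys(1-3) \<open>b \<ge> a + 1\<close> by (cases ys; cases "tl ys") auto
  have "\<forall>t\<ge>a. \<bar>f t - lin_interp f ys t\<bar> \<le> e"
    using lin_interp_error_from_hd[OF ys(4,1)] ys(2,3,5) mono tail by simp
  then show ?thesis using ys(4) unfolding ys_eq by blast
qed


lemma chord_relative_error_near_zero:
  fixes f :: "real \<Rightarrow> real"
  assumes near: "\<And>t. t \<in> {0<..a} \<Longrightarrow> \<bar>f t - D * t\<bar> \<le> \<eta> * D * t"
    and "D > 0" "\<eta> \<le> 1/2" "t \<in> {0<..a}"
  shows "0 < f t \<and> \<bar>f t - f a / a * t\<bar> \<le> 4 * \<eta> * f t"
proof -
  have t: "0 < t" "t \<le> a" using assms(4) by auto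
  have "f a / a - D = (f a - D * a) / a" using t by (simp add: field_simps)
  then have "\<bar>f a / a - D\<bar> = \<bar>f a - D * a\<bar> / a" using t by simp
  also have "\<dots> \<le> \<eta> * D" using near[of a] t by (simp add: divide_le_eq)
  finally have slope: "\<bar>f a / a - D\<bar> \<le> \<eta> * D" .
  have "\<bar>f a / a * t - D * t\<bar> = \<bar>(f a / a - D) * t\<bar>" by (simp only: left_diff_distrib)
  also have "\<dots> = \<bar>f a / a - D\<bar> * t" using t by (simp add: abs_mult)
  also have "\<dots> \<le> \<eta> * D * t" using slope t by (simp add: mult_right_mono)
  finally have "\<bar>f t - f a / a * t\<bar> \<le> 2 * \<eta> * D * t" using near[OF assms(4)] by linarith
  moreover have Dt: "0 < D * t" using \<open>D > 0\<close> t by simp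
  moreover have "\<eta> * (D * t) \<le> 1/2 * (D * t)"
    using \<open>\<eta> \<le> 1/2\<close> Dt by (intro mult_right_mono) auto
  ultimately have "D * t \<le> 2 * f t"
    using near[OF assms(4)] by (simp add: abs_le_iff)
  moreover have "0 \<le> \<eta>"
  proof -
    have "0 \<le> \<eta> * (D * t)" using near[OF assms(4)] by (simp add: mult.assoc order_trans[OF abs_ge_zero])
    then show ?thesis using Dt by (simp add: zero_le_mult_iff)
  qed
  ultimately have "\<eta> * (D * t) \<le> \<eta> * (2 * f t)" by (intro mult_left_mono)
  then have "2 * \<eta> * D * t \<le> 4 * \<eta> * f t" by (simp add: algebra_simps)
  then show ?thesis
    using \<open>\<bar>f t - f a / a * t\<bar> \<le> 2 * \<eta> * D * t\<close> \<open>D * t \<le> 2 * f t\<close> Dt by linarith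
qed


lemma chord_relative_error_at_zero:
  fixes f :: "real \<Rightarrow> real"
  assumes "(f has_real_derivative D) (at 0 within {0..})" "f 0 = 0" "D > 0" "eps > 0"
  shows "\<exists>a>0. \<forall>t\<in>{0<..a}. 0 < f t \<and> \<bar>f t - f a / a * t\<bar> \<le> eps * f t"
proof -
  define \<eta> where "\<eta> = min (1/2) (eps/4)"
  have \<eta>: "\<eta> \<le> 1/2" "4 * \<eta> \<le> eps" "\<eta> * D > 0"
    using assms(3,4) by (auto simp: \<eta>_def)
  have "\<forall>e>0. \<exists>d>0. \<forall>y\<in>{0..}. norm (y - 0) < d \<longrightarrow>
      norm (f y - f 0 - D * (y - 0)) \<le> e * norm (y - 0)"
    using assms(1) unfolding has_field_derivative_def has_derivative_within_alt by blast
  then obtain d where "d > 0" and d: "\<And>y. y \<in> {0..} \<Longrightarrow> norm (y - 0) < d \<Longrightarrow>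
      norm (f y - f 0 - D * (y - 0)) \<le> \<eta> * D * norm (y - 0)"
    using \<eta>(3) by blast
  define a where "a = d / 2"
  have near: "\<bar>f t - D * t\<bar> \<le> \<eta> * D * t" if "t \<in> {0<..a}" for t
    using d[of t] that \<open>d > 0\<close> assms(2) by (simp add: a_def)
  have "0 < f t \<and> \<bar>f t - f a / a * t\<bar> \<le> eps * f t" if "t \<in> {0<..a}" for t
  proof -
    have "0 < f t" and err: "\<bar>f t - f a / a * t\<bar> \<le> 4 * \<eta> * f t"
      using chord_relative_error_near_zero[of a f D \<eta> t] \<open>D > 0\<close> \<eta>(1) that near by auto
    moreover have "4 * \<eta> * f t \<le> eps * f t" using \<eta>(2) \<open>0 < f t\<close> by (simp add: mult_right_mono)
    ultimately show ?thesis by linarith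
  qed
  moreover have "a > 0" using \<open>d > 0\<close> by (simp add: a_def)
  ultimately show ?thesis by blast
qed

theorem theorem3:
  fixes f f' :: "real \<Rightarrow> real" and lam eps :: real
  assumes deriv: "\<And>t. t \<ge> 0 \<Longrightarrow> (f has_real_derivative f' t) (at t within {0..})"
    and cont_deriv: "continuous_on {0..} f'"
    and mono: "mono_on {0..} f"
    and range: "f ` {0..} \<subseteq> {0..1}"
    and f0: "f 0 = 0"
    and lam_pos: "lam > 0" and fd0: "f' 0 \<ge> lam"
    and eps_pos: "eps > 0"
  shows "\<exists>g. piecewise_linear_nonneg g \<and> (\<forall>t > 0. \<bar>f t - g t\<bar> / f t \<le> eps)"
proof -
  have "f' 0 > 0" using fd0 lam_pos by simp
  then obtain a where "a > 0"
    and chord: "\<And>t. t \<in> {0<..a} \<Longrightarrow> 0 < f t \<and> \<bar>f t - f a / a * t\<bar> \<le> eps * f t"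
    using chord_relative_error_at_zero[OF deriv[of 0] f0 _ eps_pos] by auto
  have "f a > 0" using chord[of a] \<open>a > 0\<close> by simp
  have mono_a: "mono_on {a..} f" using mono \<open>a > 0\<close> by (auto intro: mono_on_subset)
  moreover have "f ` {a..} \<subseteq> {0..1}" using range \<open>a > 0\<close> by (auto simp: image_subset_iff)
  then have "bdd_above (f ` {a..})" by (meson bdd_above_Icc bdd_above_mono)
  moreover have "continuous_on {a..} f"
    using DERIV_continuous_on[of "{0..}" f f'] deriv \<open>a > 0\<close> continuous_on_subset by fastforce
  ultimately obtain y zs where sorted: "sorted_wrt (<) (a # y # zs)"
    and approx: "\<And>t. a \<le> t \<Longrightarrow> \<bar>f t - lin_interp f (a # y # zs) t\<bar> \<le> eps * f a"
    using lin_interp_approx_on_ray[of a f "eps * f a"] eps_pos \<open>f a > 0\<close> by auto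
  define g where "g = lin_interp f (0 # a # y # zs)"
  have sorted0: "sorted_wrt (<) (0 # a # y # zs)" using sorted \<open>a > 0\<close> by auto
  have "0 < f t \<and> \<bar>f t - g t\<bar> \<le> eps * f t" if "t > 0" for t
  proof (cases "t \<le> a")
    case True
    then show ?thesis using chord[of t] \<open>t > 0\<close> by (simp add: g_def f0 ac_simps)
  next
    case False
    have "f a \<le> f t" using mono_a False by (auto intro: mono_onD)
    moreover have "g t = lin_interp f (a # y # zs) t"
      using lin_interp_Cons_Cons_right[OF sorted0] False by (simp add: g_def)
    moreover have "eps * f a \<le> eps * f t" using \<open>f a \<le> f t\<close> eps_pos by simp
    ultimately show ?thesis using approx[of t] False \<open>f a > 0\<close> by linarith
  qed
  moreover have "piecewise_linear_nonneg g" using piecewise_linear_lin_interp[OF sorted0] by (simp add: g_def)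
  ultimately show ?thesis by (auto simp: divide_le_eq)
qed

end
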